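(* For $n\ge 3$, the path $P_n$ with $n$ vertices satisfies $\nu_*(P_n)\le 4n-5$.
   Context: For a finite simple graph $G=(V,E)$ with $\ell=|V|+|E|$, a construction sequence (c-sequence) is a bijection $x:\{1,\dots,\ell\}\to V\sqcup E$ such that every edge $e=uw$ satisfies $x^{-1}(e)>\max\{x^{-1}(u),x^{-1}(w)\}$. The cost of $x$ is $\nu(x)=\sum_{e=uw\in E}\big(2x^{-1}(e)-x^{-1}(u)-x^{-1}(w)\big)$, and $\nu_*(G)$ is the minimum of $\nu(x)$ over all c-sequences for $G$. $P_n$ is the path with vertex set $\{1,\dots,n\}$ and edges $\{j,j+1\}$, $1\le j\le n-1$. *)

theory Defs
  imports Main
begin

definition simple_graph :: "'a set \<Rightarrow> 'a set set \<Rightarrow> bool" where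
  "simple_graph V E \<longleftrightarrow> finite V \<and> (\<forall>e\<in>E. e \<subseteq> V \<and> card e = 2)"

definition graph_elems :: "'a set \<Rightarrow> 'a set set \<Rightarrow> ('a + 'a set) set" where
  "graph_elems V E = Inl ` V \<union> Inr ` E"

definition c_sequence :: "'a set \<Rightarrow> 'a set set \<Rightarrow> (nat \<Rightarrow> 'a + 'a set) \<Rightarrow> bool" where
  "c_sequence V E x \<longleftrightarrow>
     bij_betw x {1..card V + card E} (graph_elems V E) \<and>
     (\<forall>e\<in>E. \<forall>u\<in>e.
        inv_into {1..card V + card E} x (Inr e) > inv_into {1..card V + card E} x (Inl u))"

text \<open>Cost: sum over edges e = uw of 2 x^{-1}(e) - x^{-1}(u) - x^{-1}(w),
  written as sum over the endpoints of e (x^{-1}(e) - x^{-1}(u)).\<close>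

definition c_cost :: "'a set \<Rightarrow> 'a set set \<Rightarrow> (nat \<Rightarrow> 'a + 'a set) \<Rightarrow> int" where
  "c_cost V E x = (let p = inv_into {1..card V + card E} x in
     (\<Sum>e\<in>E. \<Sum>u\<in>e. int (p (Inr e)) - int (p (Inl u))))"

definition min_cost :: "'a set \<Rightarrow> 'a set set \<Rightarrow> int" where
  "min_cost V E = Min (c_cost V E ` {x. c_sequence V E x})"

definition path_V :: "nat \<Rightarrow> nat set" where
  "path_V n = {1..n}"

definition path_E :: "nat \<Rightarrow> nat set set" where
  "path_E n = {{j, j+1} | j. 1 \<le> j \<and> j + 1 \<le> n}"

end

theory Submission
  imports Defs "HOL-Library.FuncSet"
begin

(* A c-sequence is the same as a position map p from V \<sqcup> E onto {1..|V|+|E|} that puts each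
   edge after its endpoints; the cost is the sum of p(e) - p(u) over edges e and endpoints u.
   For P_n take the order v1, v2, e1, v3, e2, ..., vn, e(n-1): every edge comes right after
   its later endpoint, so it contributes 1 + 3 = 4, except e1, which contributes 1 + 2 = 3.
   Hence the cost is 4(n-1) - 1 = 4n - 5. *)

lemma finite_graph_elems:
  assumes "simple_graph V E"
  shows "finite (graph_elems V E)"
proof -
  have "E \<subseteq> Pow V" "finite V"
    using assms by (auto simp: simple_graph_def)
  then show ?thesis
    by (simp add: graph_elems_def finite_subset)
qed

lemma inv_into_restrict: "inv_into A (restrict f A) = inv_into A f"
  unfolding inv_into_def by (intro ext arg_cong[where f = Eps]) auto

lemma c_cost_restrict:
  "c_cost V E (restrict x {1..card V + card E}) = c_cost V E x"
  by (simp only: c_cost_def inv_into_restrict)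

lemma finite_c_cost_image:
  assumes "simple_graph V E"
  shows "finite (c_cost V E ` {x. c_sequence V E x})"
proof -
  let ?A = "{1..card V + card E}"
  have "c_cost V E ` {x. c_sequence V E x} \<subseteq> c_cost V E ` (?A \<rightarrow>\<^sub>E graph_elems V E)"
  proof
    fix c assume "c \<in> c_cost V E ` {x. c_sequence V E x}"
    then obtain x where "c_sequence V E x" and c: "c = c_cost V E x"
      by blast
    then have "restrict x ?A \<in> ?A \<rightarrow>\<^sub>E graph_elems V E"
      by (auto simp: c_sequence_def bij_betw_def)
    then show "c \<in> c_cost V E ` (?A \<rightarrow>\<^sub>E graph_elems V E)"
      unfolding c by (metis c_cost_restrict image_eqI)
  qed
  moreover have "finite (?A \<rightarrow>\<^sub>E graph_elems V E)"
    using finite_graph_elems[OF assms] by (simp add: finite_PiE)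
  ultimately show ?thesis
    by (meson finite_imageI finite_subset)
qed

lemma graph_elems_incident:
  assumes "simple_graph V E" "e \<in> E" "u \<in> e"
  shows "Inl u \<in> graph_elems V E" "Inr e \<in> graph_elems V E"
  using assms by (auto simp: graph_elems_def simple_graph_def)

lemma c_sequence_inv_into_position:
  assumes "simple_graph V E"
    and p: "bij_betw p (graph_elems V E) {1..card V + card E}"
    and "\<forall>e\<in>E. \<forall>u\<in>e. p (Inl u) < p (Inr e)"
  shows "c_sequence V E (inv_into (graph_elems V E) p)"
  unfolding c_sequence_def
  \<comment> \<open>One_nat_def would rewrite the interval to {Suc 0..}, so inv_into_inv_into_eq no longer matches\<close>
  using bij_betw_inv_into[OF p] assms(3)
  by (simp add: inv_into_inv_into_eq[OF p] graph_elems_incident[OF assms(1)] del: One_nat_def)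

lemma c_cost_inv_into_position:
  assumes "simple_graph V E"
    and p: "bij_betw p (graph_elems V E) {1..card V + card E}"
  shows "c_cost V E (inv_into (graph_elems V E) p)
           = (\<Sum>e\<in>E. \<Sum>u\<in>e. int (p (Inr e)) - int (p (Inl u)))"
  unfolding c_cost_def Let_def
  by (intro sum.cong refl)
    (simp add: inv_into_inv_into_eq[OF p] graph_elems_incident[OF assms(1)] del: One_nat_def)

lemma min_cost_le_position_cost:
  assumes "simple_graph V E"
    and "bij_betw p (graph_elems V E) {1..card V + card E}"
    and "\<forall>e\<in>E. \<forall>u\<in>e. p (Inl u) < p (Inr e)"
  shows "min_cost V E \<le> (\<Sum>e\<in>E. \<Sum>u\<in>e. int (p (Inr e)) - int (p (Inl u)))"
  unfolding min_cost_def c_cost_inv_into_position[OF assms(1,2), symmetric]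
  using finite_c_cost_image[OF assms(1)] c_sequence_inv_into_position[OF assms] by simp

lemma path_E_eq_image: "path_E n = (\<lambda>j. {j, j + 1}) ` {1..n - 1}"
  unfolding path_E_def by force

lemma inj_on_path_edge: "inj_on (\<lambda>j::nat. {j, j + 1}) A"
  by (auto simp: inj_on_def doubleton_eq_iff)

lemma card_path_E: "card (path_E n) = n - 1"
  unfolding path_E_eq_image by (simp only: card_image[OF inj_on_path_edge] card_atLeastAtMost)

lemma simple_graph_path: "simple_graph (path_V n) (path_E n)"
  by (auto simp: simple_graph_def path_V_def path_E_def)

definition path_position :: "nat + nat set \<Rightarrow> nat" where
  "path_position y =
     (case y of Inl k \<Rightarrow> if k = 1 then 1 else 2 * k - 2 | Inr e \<Rightarrow> 2 * Min e + 1)"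

definition path_sequence :: "nat \<Rightarrow> nat + nat set" where
  "path_sequence i =
     (if i = 1 then Inl 1 else if even i then Inl (i div 2 + 1) else Inr {i div 2, i div 2 + 1})"

lemma path_position_edge [simp]: "path_position (Inr {j, Suc j}) = 2 * j + 1"
  by (simp add: path_position_def)

lemma bij_betw_path_position:
  assumes "n \<ge> 1"
  shows "bij_betw path_position (graph_elems (path_V n) (path_E n)) {1..2 * n - 1}"
proof (rule bij_betw_byWitness[where f' = path_sequence])
  show "\<forall>y\<in>graph_elems (path_V n) (path_E n). path_sequence (path_position y) = y"
  proof
    fix y assume "y \<in> graph_elems (path_V n) (path_E n)"
    then consider k where "y = Inl k" "k \<ge> 1" | j where "y = Inr {j, Suc j}" "j \<ge> 1"
      by (auto simp: graph_elems_def path_V_def path_E_def)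
    then show "path_sequence (path_position y) = y"
      by cases (auto simp: path_sequence_def path_position_def)
  qed
  show "\<forall>i\<in>{1..2 * n - 1}. path_position (path_sequence i) = i"
    by (auto simp: path_sequence_def path_position_def elim!: evenE oddE)
  show "path_position ` graph_elems (path_V n) (path_E n) \<subseteq> {1..2 * n - 1}"
    by (auto simp: graph_elems_def path_V_def path_E_def path_position_def)
  have "path_sequence i \<in> graph_elems (path_V n) (path_E n)" if "i \<in> {1..2 * n - 1}" for i
  proof -
    have "i = 1 \<or> (i div 2 \<ge> 1 \<and> i div 2 + 1 \<le> n)"
      using that by auto
    then show ?thesis
      using assms by (auto simp: path_sequence_def graph_elems_def path_V_def path_E_def)
  qed
  then show "path_sequence ` {1..2 * n - 1} \<subseteq> graph_elems (path_V n) (path_E n)"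
    by blast
qed

lemma path_position_edge_cost:
  assumes "j \<ge> 1"
  shows "(\<Sum>u\<in>{j, j + 1}. int (path_position (Inr {j, j + 1})) - int (path_position (Inl u)))
     = 4 - (if j = 1 then 1 else 0)"
  using assms by (auto simp: path_position_def)

lemma path_position_cost:
  assumes "n \<ge> 2"
  shows "(\<Sum>e\<in>path_E n. \<Sum>u\<in>e. int (path_position (Inr e)) - int (path_position (Inl u)))
           = 4 * int n - 5"
proof -
  have "(\<Sum>e\<in>path_E n. \<Sum>u\<in>e. int (path_position (Inr e)) - int (path_position (Inl u)))
      = (\<Sum>j\<in>{1..n - 1}. 4 - (if j = 1 then 1 else 0 :: int))"
    unfolding path_E_eq_image sum.reindex[OF inj_on_path_edge] comp_def
    by (intro sum.cong refl) (simp only: path_position_edge_cost atLeastAtMost_iff)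
  also have "\<dots> = (\<Sum>j\<in>{1..n - 1}. 4 :: int) - (\<Sum>j\<in>{1..n - 1}. if j = 1 then 1 else 0)"
    by (rule sum_subtractf)
  also have "\<dots> = 4 * int n - 5"
    using assms by (simp add: of_nat_diff)
  finally show ?thesis .
qed

theorem theorem9:
  fixes n :: nat
  assumes "n \<ge> 3"
  shows "min_cost (path_V n) (path_E n) \<le> 4 * int n - 5"
proof -
  have "card (path_V n) + card (path_E n) = 2 * n - 1"
    using assms by (simp add: path_V_def card_path_E)
  then have "bij_betw path_position (graph_elems (path_V n) (path_E n))
               {1..card (path_V n) + card (path_E n)}"
    using bij_betw_path_position assms by simp
  moreover have "\<forall>e\<in>path_E n. \<forall>u\<in>e. path_position (Inl u) < path_position (Inr e)"
    by (auto simp: path_E_def path_position_def)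
  ultimately have "min_cost (path_V n) (path_E n)
      \<le> (\<Sum>e\<in>path_E n. \<Sum>u\<in>e. int (path_position (Inr e)) - int (path_position (Inl u)))"
    by (rule min_cost_le_position_cost[OF simple_graph_path])
  also have "\<dots> = 4 * int n - 5"
    using assms by (simp add: path_position_cost)
  finally show ?thesis .
qed

end
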